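(* For every unit vector $|\psi\rangle$ with reduced-state eigenvalues $p_1,\dots,p_d$, one has $\mathcal{E}_\star(\psi)=E_L(\psi)$ if and only if the quantity $\big|\sum_{i=1}^d\lambda_ip_{\sigma(i)}\big|$ takes the same value for all permutations $\sigma\in S_d$, where $\lambda_i=e^{i\theta_i}$ is the stellar spectrum. In particular, for $d=2$ and $d=3$, $\mathcal{E}_\star(\psi)=E_L(\psi)$ for all pure states $|\psi\rangle$.
   Context: Let $d=d_A\le d_B$, $d\ge 2$. The stellar spectrum is $\lambda_j=e^{i\theta_j}$, $\theta_j=\frac{(d-2j+1)\pi}{d}$, $j=1,\dots,d$. The stellar mirror entanglement is $\mathcal{E}_\star(\psi)=1-\max_W|\langle\psi|(W\otimes\mathbb{1})|\psi\rangle|^2$, the maximum over all unitaries $W$ on $\mathbb{C}^{d_A}$ whose eigenvalues are exactly the stellar spectrum. The linear entropy of entanglement is $E_L(\psi)=\frac{d}{d-1}\big(1-\sum_ip_i^2\big)$, where $p_i$ are the eigenvalues of $\mathrm{Tr}_B|\psi\rangle\langle\psi|$. *)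

theory Defs
  imports Complex_Main "HOL-Combinatorics.Permutations" "Jordan_Normal_Form.Schur_Decomposition"
begin

(* States of C^{dA} \<otimes> C^{dB} are vectors of dimension dA*dB; the basis vector
   |a>|b> (a < dA, b < dB) has index a*dB + b. *)

definition stellar_lambda :: "nat \<Rightarrow> nat \<Rightarrow> complex" where
  "stellar_lambda d i = cis ((real d - 2 * real (Suc i) + 1) * pi / real d)"
  (* lambda_j for j = i+1, i = 0..d-1 *)

definition unitary_mat :: "nat \<Rightarrow> complex mat \<Rightarrow> bool" where
  "unitary_mat n W \<longleftrightarrow> W \<in> carrier_mat n n \<and> W * mat_adjoint W = 1\<^sub>m n \<and> mat_adjoint W * W = 1\<^sub>m n"

definition stellar_unitary :: "nat \<Rightarrow> complex mat \<Rightarrow> bool" where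
  "stellar_unitary d W \<longleftrightarrow> unitary_mat d W \<and>
     char_poly W = (\<Prod>i<d. [:- stellar_lambda d i, 1:])"

(* W \<otimes> 1_{dB} acting on C^{dA} \<otimes> C^{dB} *)
definition tensor_id :: "nat \<Rightarrow> nat \<Rightarrow> complex mat \<Rightarrow> complex mat" where
  "tensor_id dA dB W = mat (dA * dB) (dA * dB)
     (\<lambda>(i, j). if i mod dB = j mod dB then W $$ (i div dB, j div dB) else 0)"

definition expect :: "complex vec \<Rightarrow> complex mat \<Rightarrow> complex" where
  "expect psi X = (\<Sum>i<dim_vec psi. cnj (psi $ i) * (X *\<^sub>v psi) $ i)"

definition unit_state :: "nat \<Rightarrow> nat \<Rightarrow> complex vec \<Rightarrow> bool" where
  "unit_state dA dB psi \<longleftrightarrow> psi \<in> carrier_vec (dA * dB) \<and>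
     (\<Sum>i<dA * dB. (cmod (psi $ i))\<^sup>2) = 1"

definition reduced_state :: "nat \<Rightarrow> nat \<Rightarrow> complex vec \<Rightarrow> complex mat" where
  "reduced_state dA dB psi = mat dA dA
     (\<lambda>(a, a'). \<Sum>b<dB. psi $ (a * dB + b) * cnj (psi $ (a' * dB + b)))"

(* stellar mirror entanglement (max over the compact set of admissible W, written as Sup) *)
definition stellar_ent :: "nat \<Rightarrow> nat \<Rightarrow> complex vec \<Rightarrow> real" where
  "stellar_ent dA dB psi = 1 - (SUP W \<in> {W. stellar_unitary dA W}.
      (cmod (expect psi (tensor_id dA dB W)))\<^sup>2)"

(* linear entropy of entanglement in terms of the reduced-state eigenvalues p_0..p_{d-1} *)
definition linear_entropy :: "nat \<Rightarrow> (nat \<Rightarrow> real) \<Rightarrow> real" where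
  "linear_entropy d p = real d / (real d - 1) * (1 - (\<Sum>i<d. (p i)\<^sup>2))"

end

theory Submission
  imports Defs
begin

text \<open>
  Write the reduced state as \<open>\<rho> = V diag(p) V\<^sup>*\<close> and a stellar unitary as
  \<open>W = U diag(\<lambda>) U\<^sup>*\<close> (spectral theorem for normal matrices).  Then
  \<open>\<langle>\<psi>|W \<otimes> 1|\<psi>\<rangle> = tr (W \<rho>) = \<Sum>\<^sub>j\<^sub>i \<lambda>\<^sub>j p\<^sub>i B\<^sub>j\<^sub>i\<close> with \<open>B\<^sub>j\<^sub>i = |(U\<^sup>* V)\<^sub>j\<^sub>i|\<^sup>2\<close> doubly stochastic.
  A rearrangement argument bounds such a bilinear form by one with a permutation matrix, and
  every permutation is realised by some \<open>W\<close>; hence the maximum defining \<open>\<E>\<^sub>\<star>\<close> is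
  \<open>max\<^sub>\<sigma> |\<Sum>\<^sub>i \<lambda>\<^sub>i p\<^sub>\<sigma>\<^sub>i|\<^sup>2\<close>.  On the other hand, since the \<open>\<lambda>\<^sub>i\<close> are unimodular and sum to zero,
  the average of \<open>|\<Sum>\<^sub>i \<lambda>\<^sub>i p\<^sub>\<sigma>\<^sub>i|\<^sup>2\<close> over all permutations equals \<open>1 - E\<^sub>L\<close>.  So \<open>\<E>\<^sub>\<star> = E\<^sub>L\<close>
  iff the maximum equals the mean iff all values coincide.  For \<open>d \<le> 3\<close> the value is an
  explicit symmetric function of \<open>p\<close>, hence constant.
\<close>

section \<open>Adjoints and unitary matrices\<close>

lemma adjoint_dim [simp]:
  "dim_row (mat_adjoint A) = dim_col A" "dim_col (mat_adjoint A) = dim_row A"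
  unfolding mat_adjoint_def by auto

lemma adjoint_index [simp]:
  "i < dim_col A \<Longrightarrow> j < dim_row A \<Longrightarrow> mat_adjoint A $$ (i, j) = cnj (A $$ (j, i))"
  unfolding mat_adjoint_def mat_of_rows_def by auto

lemma adjoint_carrier [simp]: "A \<in> carrier_mat n m \<Longrightarrow> mat_adjoint A \<in> carrier_mat m n"
  unfolding carrier_mat_def by simp

lemma adjoint_adjoint [simp]: "mat_adjoint (mat_adjoint (A :: complex mat)) = A"
  by (rule eq_matI) auto

lemma mult_mat_index_sum:
  "i < dim_row A \<Longrightarrow> j < dim_col B \<Longrightarrow> dim_col A = dim_row B \<Longrightarrow>
   (A * B) $$ (i, j) = (\<Sum>k<dim_row B. A $$ (i, k) * B $$ (k, j))"
  by (auto simp: scalar_prod_def lessThan_atLeast0 intro!: sum.cong)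

lemma adjoint_mult:
  assumes "A \<in> carrier_mat n m" and "B \<in> carrier_mat m k"
  shows "mat_adjoint (A * B :: complex mat) = mat_adjoint B * mat_adjoint A"
  using assms
  by (intro eq_matI) (auto simp: scalar_prod_def cnj_sum mult.commute intro!: sum.cong)

lemma unitary_carrier: "unitary_mat n A \<Longrightarrow> A \<in> carrier_mat n n"
  unfolding unitary_mat_def by auto

lemma unitary_adjoint: "unitary_mat n A \<Longrightarrow> unitary_mat n (mat_adjoint A)"
  unfolding unitary_mat_def by auto

lemma unitary_cancel:
  assumes U: "unitary_mat n U" and X: "X \<in> carrier_mat n k"
  shows "mat_adjoint U * (U * X) = X" "U * (mat_adjoint U * X) = X"
proof -
  have Uc: "U \<in> carrier_mat n n" "mat_adjoint U \<in> carrier_mat n n"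
    and Ua: "U * mat_adjoint U = 1\<^sub>m n" "mat_adjoint U * U = 1\<^sub>m n"
    using U unfolding unitary_mat_def by auto
  show "mat_adjoint U * (U * X) = X" "U * (mat_adjoint U * X) = X"
    using assoc_mult_mat[OF Uc(2) Uc(1) X] assoc_mult_mat[OF Uc(1) Uc(2) X] Ua X by simp_all
qed

lemma unitary_mult:
  assumes A: "unitary_mat n A" and B: "unitary_mat n B"
  shows "unitary_mat n (A * B)"
proof -
  have Ac: "A \<in> carrier_mat n n" and Bc: "B \<in> carrier_mat n n"
    using A B unitary_carrier by auto
  have adj: "mat_adjoint (A * B) = mat_adjoint B * mat_adjoint A"
    by (rule adjoint_mult[OF Ac Bc])
  have "A * B * mat_adjoint (A * B) = A * (B * (mat_adjoint B * mat_adjoint A))"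
    unfolding adj using Ac Bc by (simp add: assoc_mult_mat[of _ n n _ n _ n] mult_carrier_mat[of _ n n _ n])
  also have "\<dots> = 1\<^sub>m n"
    using unitary_cancel(2)[OF B adjoint_carrier[OF Ac]] A unfolding unitary_mat_def by simp
  finally have 1: "A * B * mat_adjoint (A * B) = 1\<^sub>m n" .
  have "mat_adjoint (A * B) * (A * B) = mat_adjoint B * (mat_adjoint A * (A * B))"
    unfolding adj using Ac Bc by (simp add: assoc_mult_mat[of _ n n _ n _ n] mult_carrier_mat[of _ n n _ n])
  also have "\<dots> = 1\<^sub>m n"
    using unitary_cancel(1)[OF A Bc] B unfolding unitary_mat_def by simp
  finally show ?thesis using 1 Ac Bc unfolding unitary_mat_def by auto
qed

lemma unitary_sq_norm_sums:
  assumes X: "unitary_mat n X" and j: "j < n"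
  shows "(\<Sum>i<n. (cmod (X $$ (j, i)))\<^sup>2) = 1" "(\<Sum>i<n. (cmod (X $$ (i, j)))\<^sup>2) = 1"
proof -
  have Xc: "X \<in> carrier_mat n n" using X unitary_carrier by auto
  have "(\<Sum>i<n. X $$ (j, i) * cnj (X $$ (j, i))) = (X * mat_adjoint X) $$ (j, j)"
    using Xc j by (subst mult_mat_index_sum) auto
  also have "\<dots> = 1" using X j unfolding unitary_mat_def by simp
  finally have "complex_of_real (\<Sum>i<n. (cmod (X $$ (j, i)))\<^sup>2) = 1"
    by (simp only: of_real_sum complex_norm_square)
  then show "(\<Sum>i<n. (cmod (X $$ (j, i)))\<^sup>2) = 1" using of_real_eq_1_iff by blast
  have "(\<Sum>i<n. X $$ (i, j) * cnj (X $$ (i, j))) = (mat_adjoint X * X) $$ (j, j)"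
    using Xc j by (subst mult_mat_index_sum) (auto simp: mult.commute)
  also have "\<dots> = 1" using X j unfolding unitary_mat_def by simp
  finally have "complex_of_real (\<Sum>i<n. (cmod (X $$ (i, j)))\<^sup>2) = 1"
    by (simp only: of_real_sum complex_norm_square)
  then show "(\<Sum>i<n. (cmod (X $$ (i, j)))\<^sup>2) = 1" using of_real_eq_1_iff by blast
qed

section \<open>Unitary Schur decomposition and the spectral theorem\<close>

definition normalize_vec :: "complex vec \<Rightarrow> complex vec" where
  "normalize_vec w = complex_of_real (1 / sqrt (Re (w \<bullet>c w))) \<cdot>\<^sub>v w"

lemma cscalar_square_real:
  fixes w :: "complex vec"
  shows "w \<bullet>c w = complex_of_real (Re (w \<bullet>c w))" "Re (w \<bullet>c w) \<ge> 0"
  using conjugate_square_ge_0_vec[of w] by (auto simp: less_eq_complex_def complex_eq_iff)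

lemma normalize_vec_carrier [simp]: "w \<in> carrier_vec n \<Longrightarrow> normalize_vec w \<in> carrier_vec n"
  unfolding normalize_vec_def by simp

lemma normalize_vec_cscalar:
  fixes v w :: "complex vec"
  assumes "v \<in> carrier_vec n" "w \<in> carrier_vec n"
  shows "normalize_vec v \<bullet>c normalize_vec w =
    complex_of_real (1 / sqrt (Re (v \<bullet>c v)) * (1 / sqrt (Re (w \<bullet>c w)))) * (v \<bullet>c w)"
  using assms unfolding normalize_vec_def by (simp add: conjugate_smult_vec)

lemma normalize_vec_unit:
  fixes w :: "complex vec"
  assumes w: "w \<in> carrier_vec n" "w \<noteq> 0\<^sub>v n"
  shows "normalize_vec w \<bullet>c normalize_vec w = 1"
proof -
  define s where "s = Re (w \<bullet>c w)"
  have "w \<bullet>c w \<noteq> 0" using w conjugate_square_eq_0_vec[of w n] by auto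
  then have "s \<noteq> 0" using cscalar_square_real(1)[of w] unfolding s_def by (metis of_real_0)
  then have s: "s > 0" using cscalar_square_real(2)[of w] unfolding s_def by linarith
  have "normalize_vec w \<bullet>c normalize_vec w =
      complex_of_real (1 / sqrt s * (1 / sqrt s)) * complex_of_real s"
    using normalize_vec_cscalar[OF w(1) w(1)] cscalar_square_real(1)[of w] unfolding s_def by metis
  also have "\<dots> = complex_of_real (1 / sqrt s * (1 / sqrt s) * s)" by simp
  also have "1 / sqrt s * (1 / sqrt s) * s = 1" using s by (simp add: field_simps)
  finally show ?thesis by simp
qed

lemma orthonormal_cols_unitary:
  assumes ws: "set ws \<subseteq> carrier_vec n" "length ws = n"
    and orth: "\<And>i j. i < n \<Longrightarrow> j < n \<Longrightarrow> ws ! i \<bullet>c ws ! j = (if i = j then 1 else 0)"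
  shows "unitary_mat n (mat_of_cols n ws)"
proof -
  define W where "W = mat_of_cols n ws"
  have W: "W \<in> carrier_mat n n" unfolding W_def using ws by auto
  have "mat_adjoint W * W = 1\<^sub>m n"
  proof (rule eq_matI)
    fix i j assume "i < dim_row (1\<^sub>m n)" "j < dim_col (1\<^sub>m n)"
    then have ij: "i < n" "j < n" by auto
    have dim: "dim_vec (ws ! k) = n" if "k < n" for k
      using ws that by (metis carrier_vecD nth_mem subsetD)
    have "(mat_adjoint W * W) $$ (i, j) = (\<Sum>k<n. cnj (ws ! i $ k) * ws ! j $ k)"
      using ij W ws unfolding W_def by (subst mult_mat_index_sum) (auto simp: mat_of_cols_index)
    also have "\<dots> = ws ! j \<bullet>c ws ! i"
      using dim ij by (auto simp: scalar_prod_def mult.commute lessThan_atLeast0 intro!: sum.cong)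
    finally have "(mat_adjoint W * W) $$ (i, j) = ws ! j \<bullet>c ws ! i" .
    then show "(mat_adjoint W * W) $$ (i, j) = 1\<^sub>m n $$ (i, j)" using orth ij by auto
  qed (use W in auto)
  moreover from mat_mult_left_right_inverse[OF adjoint_carrier[OF W] W this]
  have "W * mat_adjoint W = 1\<^sub>m n" .
  ultimately show ?thesis using W unfolding unitary_mat_def W_def by auto
qed

text \<open>Every unit vector is the first column of some unitary matrix: extend it to a basis,
  orthogonalise by Gram--Schmidt, and normalise.\<close>

lemma unitary_completion:
  assumes v: "v \<in> carrier_vec n" and v1: "v \<bullet>c v = 1"
  shows "\<exists>W. unitary_mat n W \<and> col W 0 = v"
proof -
  have v0: "v \<noteq> 0\<^sub>v n" using v1 by auto
  interpret cof_vec_space n "TYPE(complex)" .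
  define b where "b = basis_completion v"
  from basis_completion[OF v v0, folded b_def]
  have indep: "\<not> lin_dep (set b)" and b: "set b \<subseteq> carrier_vec n" and dist: "distinct b"
    and len_b: "length b = n" and hd_b: "hd b = v" by auto
  have n: "n > 0" using v0 v by (cases n) auto
  then obtain vs where bv: "b = v # vs" using hd_b len_b by (cases b) auto
  define ws0 where "ws0 = gram_schmidt n b"
  from gram_schmidt_result[OF b dist indep ws0_def]
  have ws0: "set ws0 \<subseteq> carrier_vec n" "corthogonal ws0" "length ws0 = n" by (auto simp: len_b)
  have hd_ws0: "hd ws0 = v" unfolding ws0_def bv using v by simp
  have ws0_c: "ws0 ! i \<in> carrier_vec n" if "i < n" for i
    using ws0 that by (metis nth_mem subsetD)
  have ws0_nz: "ws0 ! i \<noteq> 0\<^sub>v n" if "i < n" for i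
    using corthogonalD[OF ws0(2), of i i] that ws0(3) by auto
  define ws where "ws = map normalize_vec ws0"
  have ws: "set ws \<subseteq> carrier_vec n" "length ws = n" using ws0 unfolding ws_def by auto
  have orth: "ws ! i \<bullet>c ws ! j = (if i = j then 1 else 0)" if ij: "i < n" "j < n" for i j
  proof (cases "i = j")
    case True
    then show ?thesis using normalize_vec_unit[OF ws0_c ws0_nz] ws0(3) ij unfolding ws_def by auto
  next
    case False
    then have "ws0 ! i \<bullet>c ws0 ! j = 0" using corthogonalD[OF ws0(2)] ij ws0(3) by auto
    then show ?thesis
      using False ij ws0(3) normalize_vec_cscalar[OF ws0_c ws0_c] unfolding ws_def by auto
  qed
  have "hd ws = normalize_vec v" unfolding ws_def using hd_ws0 ws0(3) n by (cases ws0) auto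
  also have "normalize_vec v = v" unfolding normalize_vec_def using v1 by simp
  finally have "ws ! 0 = v" using ws(2) n by (metis hd_conv_nth list.size(3) not_less_zero)
  moreover have "col (mat_of_cols n ws) 0 = ws ! 0" using ws n by (intro col_mat_of_cols) auto
  ultimately show ?thesis using orthonormal_cols_unitary[OF ws orth] by blast
qed

lemma unitary_deflation:
  fixes A :: "complex mat"
  assumes A: "A \<in> carrier_mat n n" and ev: "eigenvalue A e"
  shows "\<exists>W A2 A3. unitary_mat n W \<and> A2 \<in> carrier_mat 1 (n - 1) \<and> A3 \<in> carrier_mat (n - 1) (n - 1)
     \<and> mat_adjoint W * A * W = four_block_mat (mat 1 1 (\<lambda>_. e)) A2 (0\<^sub>m (n - 1) 1) A3"
proof -
  obtain v where "eigenvector A v e" using ev unfolding eigenvalue_def by blast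
  then have v: "v \<in> carrier_vec n" "v \<noteq> 0\<^sub>v n" and Av: "A *\<^sub>v v = e \<cdot>\<^sub>v v"
    using A unfolding eigenvector_def by auto
  have n: "n > 0" using v by (cases n) auto
  define u where "u = normalize_vec v"
  have u: "u \<in> carrier_vec n" "u \<bullet>c u = 1"
    using v normalize_vec_unit unfolding u_def by auto
  have Au: "A *\<^sub>v u = e \<cdot>\<^sub>v u"
    unfolding u_def normalize_vec_def
    using mult_mat_vec[OF A v(1)] Av by (auto simp: smult_smult_assoc mult.commute)
  obtain W where W: "unitary_mat n W" and Wu: "col W 0 = u"
    using unitary_completion[OF u] by blast
  have Wc: "W \<in> carrier_mat n n" "mat_adjoint W \<in> carrier_mat n n"
    using W unitary_carrier by auto
  define A' where "A' = mat_adjoint W * A * W"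
  have A': "A' \<in> carrier_mat n n" unfolding A'_def using A Wc by auto
  have "col A' 0 = (mat_adjoint W * A) *\<^sub>v col W 0"
    unfolding A'_def using A Wc n by (intro col_mult2) auto
  also have "\<dots> = mat_adjoint W *\<^sub>v (A *\<^sub>v u)"
    using Wu by (simp add: assoc_mult_mat_vec[OF Wc(2) A u(1)])
  also have "\<dots> = e \<cdot>\<^sub>v col (mat_adjoint W * W) 0"
    using Au Wc n Wu by (simp add: mult_mat_vec[OF Wc(2) u(1)] col_mult2[of _ n n])
  also have "\<dots> = e \<cdot>\<^sub>v unit_vec n 0" using W n unfolding unitary_mat_def by simp
  finally have col0: "col A' 0 = e \<cdot>\<^sub>v unit_vec n 0" .
  obtain A1 A2 A0 A3 where split: "split_block A' 1 1 = (A1, A2, A0, A3)"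
    by (cases "split_block A' 1 1") auto
  from A' n have "dim_row A' = 1 + (n - 1)" "dim_col A' = 1 + (n - 1)" by auto
  from split_block[OF split this] have A2: "A2 \<in> carrier_mat 1 (n - 1)"
    and A3: "A3 \<in> carrier_mat (n - 1) (n - 1)" and blocks: "A' = four_block_mat A1 A2 A0 A3"
    by auto
  have "A' $$ (i, 0) = (if i = 0 then e else 0)" if "i < n" for i
    using arg_cong[OF col0, of "\<lambda>x. x $ i"] that A' n by auto
  then have "A1 = mat 1 1 (\<lambda>_. e)" "A0 = 0\<^sub>m (n - 1) 1"
    using split A' n unfolding split_block_def Let_def by auto
  then show ?thesis using W A2 A3 blocks unfolding A'_def by blast
qed

lemma char_poly_deflated:
  fixes A :: "complex mat"
  assumes W: "unitary_mat n W" and A: "A \<in> carrier_mat n n"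
    and A2: "A2 \<in> carrier_mat 1 (n - 1)" and A3: "A3 \<in> carrier_mat (n - 1) (n - 1)"
    and WAW: "mat_adjoint W * A * W = four_block_mat (mat 1 1 (\<lambda>_. e)) A2 (0\<^sub>m (n - 1) 1) A3"
  shows "char_poly A = [:- e, 1:] * char_poly A3"
proof -
  have "similar_mat (mat_adjoint W * A * W) A"
    unfolding similar_mat_def similar_mat_wit_def Let_def using W A unitary_carrier[OF W]
    unfolding unitary_mat_def by (intro exI[of _ "mat_adjoint W"] exI[of _ W]) auto
  then have "char_poly A = char_poly (mat_adjoint W * A * W)" by (simp add: char_poly_similar)
  also have "\<dots> = char_poly (mat 1 1 (\<lambda>_. e)) * char_poly A3"
    unfolding WAW by (rule char_poly_four_block_zeros_col[OF _ A2 A3]) simp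
  also have "char_poly (mat 1 1 (\<lambda>_. e)) = [:- e, 1:]"
    by (simp add: char_poly_defs det_def sign_def)
  finally show ?thesis .
qed

text \<open>This is the inductive step of the unitary
  Schur decomposition.\<close>

lemma unitary_block_similarity:
  fixes A :: "complex mat"
  assumes W: "unitary_mat n W" and A: "A \<in> carrier_mat n n"
    and A1: "A1 \<in> carrier_mat 1 1" and A2: "A2 \<in> carrier_mat 1 (n - 1)"
    and A3: "A3 \<in> carrier_mat (n - 1) (n - 1)"
    and WAW: "mat_adjoint W * A * W = four_block_mat A1 A2 (0\<^sub>m (n - 1) 1) A3"
    and U3: "unitary_mat (n - 1) U3" and B3: "B3 \<in> carrier_mat (n - 1) (n - 1)"
    and A3_eq: "A3 = U3 * B3 * mat_adjoint U3"
  shows "\<exists>U. unitary_mat n U \<and> A = U * four_block_mat A1 (A2 * U3) (0\<^sub>m (n - 1) 1) B3 * mat_adjoint U"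
proof -
  have U3c: "U3 \<in> carrier_mat (n - 1) (n - 1)" using U3 unitary_carrier by auto
  have Wc: "W \<in> carrier_mat n n" "mat_adjoint W \<in> carrier_mat n n"
    using W unitary_carrier by auto
  define P where "P = four_block_mat (1\<^sub>m 1) (0\<^sub>m 1 (n - 1)) (0\<^sub>m (n - 1) 1) U3"
  define C where "C = four_block_mat A1 (A2 * U3) (0\<^sub>m (n - 1) 1) B3"
  have "similar_mat_wit A3 B3 U3 (mat_adjoint U3)"
    using A3 B3 U3 A3_eq unfolding similar_mat_wit_def Let_def unitary_mat_def by auto
  moreover have "A2 = 1\<^sub>m 1 * (A2 * U3) * mat_adjoint U3"
    using assoc_mult_mat[OF A2 U3c adjoint_carrier[OF U3c]] U3 A2 unfolding unitary_mat_def by simp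
  moreover have "0\<^sub>m (n - 1) 1 = U3 * 0\<^sub>m (n - 1) 1 * 1\<^sub>m 1" using U3c by simp
  ultimately have sim0: "similar_mat_wit (four_block_mat A1 A2 (0\<^sub>m (n - 1) 1) A3) C P
      (four_block_mat (1\<^sub>m 1) (0\<^sub>m 1 (n - 1)) (0\<^sub>m (n - 1) 1) (mat_adjoint U3))"
    unfolding C_def P_def using A1 A2 A3 U3c
    by (intro similar_mat_wit_four_block[OF similar_mat_wit_refl[OF A1]]) auto
  have adjP: "four_block_mat (1\<^sub>m 1) (0\<^sub>m 1 (n - 1)) (0\<^sub>m (n - 1) 1) (mat_adjoint U3) =
      mat_adjoint P"
    unfolding P_def by (rule eq_matI) (use U3c in auto)
  have "similar_mat_wit (mat_adjoint W * A * W) C P (mat_adjoint P)"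
    using sim0 unfolding WAW adjP .
  then have Pc: "P \<in> carrier_mat n n" and Cc: "C \<in> carrier_mat n n"
    and PP: "P * mat_adjoint P = 1\<^sub>m n" "mat_adjoint P * P = 1\<^sub>m n"
    and WAW_eq: "mat_adjoint W * A * W = P * C * mat_adjoint P"
    using Wc unfolding similar_mat_wit_def Let_def by (simp_all add: insert_subset)
  have P: "unitary_mat n P" using Pc PP unfolding unitary_mat_def by auto
  have "A = (W * mat_adjoint W) * A * (W * mat_adjoint W)"
    using W A unfolding unitary_mat_def by simp
  also have "\<dots> = W * (mat_adjoint W * A * W) * mat_adjoint W"
    using A Wc by (simp add: assoc_mult_mat[of _ n n _ n _ n] mult_carrier_mat[of _ n n _ n])
  also have "\<dots> = (W * P) * C * mat_adjoint (W * P)"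
    unfolding WAW_eq adjoint_mult[OF Wc(1) Pc] using Wc Pc Cc
    by (simp add: assoc_mult_mat[of _ n n _ n _ n] mult_carrier_mat[of _ n n _ n])
  finally show ?thesis unfolding C_def using unitary_mult[OF W P] by blast
qed

text \<open>Induction on the list of roots, deflating one eigenvalue at a time.\<close>

lemma unitary_schur:
  fixes A :: "complex mat"
  assumes "A \<in> carrier_mat n n" and "char_poly A = (\<Prod>e\<leftarrow>es. [:- e, 1:])"
  shows "\<exists>U B. unitary_mat n U \<and> B \<in> carrier_mat n n \<and> upper_triangular B \<and>
    diag_mat B = es \<and> A = U * B * mat_adjoint U"
  using assms
proof (induction es arbitrary: n A)
  case Nil
  then have "n = 0" using degree_monic_char_poly[of A n] by auto
  with Nil show ?case
    by (intro exI[of _ "1\<^sub>m n"] exI[of _ A])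
      (auto simp: unitary_mat_def diag_mat_def upper_triangular_def)
next
  case (Cons e es n A)
  note A = Cons.prems(1)
  have "eigenvalue A e" unfolding eigenvalue_root_char_poly[OF A] Cons.prems(2) by simp
  then obtain W A2 A3 where W: "unitary_mat n W" and A2: "A2 \<in> carrier_mat 1 (n - 1)"
    and A3: "A3 \<in> carrier_mat (n - 1) (n - 1)"
    and WAW: "mat_adjoint W * A * W = four_block_mat (mat 1 1 (\<lambda>_. e)) A2 (0\<^sub>m (n - 1) 1) A3"
    using unitary_deflation[OF A] by blast
  define A1 :: "complex mat" where "A1 = mat 1 1 (\<lambda>_. e)"
  have A1: "A1 \<in> carrier_mat 1 1" "upper_triangular A1" "diag_mat A1 = [e]"
    unfolding A1_def by (auto simp: upper_triangular_def diag_mat_def)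
  have "[:- e, 1:] * char_poly A3 = [:- e, 1:] * (\<Prod>e\<leftarrow>es. [:- e, 1:])"
    using char_poly_deflated[OF W A A2 A3 WAW] Cons.prems(2) by simp
  moreover have "[:- e, 1:] \<noteq> 0" by simp
  ultimately have "char_poly A3 = (\<Prod>e\<leftarrow>es. [:- e, 1:])" using mult_left_cancel by blast
  from Cons.IH[OF A3 this] obtain U3 B3 where U3: "unitary_mat (n - 1) U3"
    and B3: "B3 \<in> carrier_mat (n - 1) (n - 1)" "upper_triangular B3" "diag_mat B3 = es"
    and A3_eq: "A3 = U3 * B3 * mat_adjoint U3" by blast
  define C where "C = four_block_mat A1 (A2 * U3) (0\<^sub>m (n - 1) 1) B3"
  obtain U where "unitary_mat n U" "A = U * C * mat_adjoint U"
    using unitary_block_similarity[OF W A A1(1) A2 A3 WAW[folded A1_def] U3 B3(1) A3_eq]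
    unfolding C_def by blast
  moreover have "n = 1 + (n - 1)"
    using arg_cong[OF WAW, of dim_row] unitary_carrier[OF W] A1(1) A3 by simp
  then have "C \<in> carrier_mat n n"
    using four_block_carrier_mat[OF A1(1) B3(1)] unfolding C_def by metis
  moreover have "upper_triangular C" unfolding C_def
    using upper_triangular_four_block[OF A1(1) B3(1) A1(2) B3(2)] .
  moreover have "diag_mat C = e # es"
    unfolding C_def diag_four_block_mat[OF A1(1) B3(1)] A1(3) B3(3) by simp
  ultimately show ?case by blast
qed

text \<open>An upper triangular normal matrix is diagonal (row by row, comparing the diagonal entries
  of \<open>B B\<^sup>*\<close> and \<open>B\<^sup>* B\<close>).\<close>

lemma normal_upper_triangular_diagonal:
  fixes B :: "complex mat"
  assumes B: "B \<in> carrier_mat n n" and ut: "upper_triangular B"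
    and nor: "B * mat_adjoint B = mat_adjoint B * B"
  shows "i < n \<Longrightarrow> j < n \<Longrightarrow> i \<noteq> j \<Longrightarrow> B $$ (i, j) = 0"
proof (induction i arbitrary: j rule: less_induct)
  case (less i)
  have col_zero: "B $$ (k, i) = 0" if "k < n" "k \<noteq> i" for k
    using less.IH[of k i] ut B that less.prems unfolding upper_triangular_def
    by (cases "k < i") auto
  have "(\<Sum>k<n. B $$ (i, k) * cnj (B $$ (i, k))) = (B * mat_adjoint B) $$ (i, i)"
    using B less.prems by (subst mult_mat_index_sum) auto
  also have "\<dots> = (mat_adjoint B * B) $$ (i, i)" using nor by simp
  also have "\<dots> = (\<Sum>k<n. B $$ (k, i) * cnj (B $$ (k, i)))"
    using B less.prems by (subst mult_mat_index_sum) (auto simp: mult.commute)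
  finally have "complex_of_real (\<Sum>k<n. (cmod (B $$ (i, k)))\<^sup>2) =
      complex_of_real (\<Sum>k<n. (cmod (B $$ (k, i)))\<^sup>2)"
    by (simp only: of_real_sum complex_norm_square)
  then have eq: "(\<Sum>k<n. (cmod (B $$ (i, k)))\<^sup>2) = (\<Sum>k<n. (cmod (B $$ (k, i)))\<^sup>2)"
    using of_real_eq_iff by blast
  have i: "i \<in> {..<n}" using less.prems by simp
  have "(\<Sum>k<n. (cmod (B $$ (k, i)))\<^sup>2) = (cmod (B $$ (i, i)))\<^sup>2"
    using sum.remove[OF finite_lessThan i, of "\<lambda>k. (cmod (B $$ (k, i)))\<^sup>2"] col_zero by simp
  with eq sum.remove[OF finite_lessThan i, of "\<lambda>k. (cmod (B $$ (i, k)))\<^sup>2"]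
  have "(\<Sum>k\<in>{..<n} - {i}. (cmod (B $$ (i, k)))\<^sup>2) = 0" by simp
  then have "\<forall>k\<in>{..<n} - {i}. (cmod (B $$ (i, k)))\<^sup>2 = 0"
    by (subst sum_nonneg_eq_0_iff[symmetric]) auto
  then show ?case using less.prems by auto
qed

lemma normal_unitary_conj:
  fixes A :: "complex mat"
  assumes U: "unitary_mat n U" and A: "A \<in> carrier_mat n n"
    and nor: "A * mat_adjoint A = mat_adjoint A * A"
  defines "B \<equiv> mat_adjoint U * A * U"
  shows "B * mat_adjoint B = mat_adjoint B * B"
proof -
  have Uc: "U \<in> carrier_mat n n" "mat_adjoint U \<in> carrier_mat n n"
    and UU: "U * mat_adjoint U = 1\<^sub>m n" using U unfolding unitary_mat_def by auto
  have Ac: "mat_adjoint A \<in> carrier_mat n n" using A by simp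
  have "mat_adjoint B = mat_adjoint U * mat_adjoint (mat_adjoint U * A)"
    unfolding B_def by (rule adjoint_mult) (use Uc A in auto)
  also have "\<dots> = mat_adjoint U * (mat_adjoint A * U)" using adjoint_mult[OF Uc(2) A] by simp
  finally have adj: "mat_adjoint B = mat_adjoint U * (mat_adjoint A * U)" .
  have "B * mat_adjoint B = mat_adjoint U * (A * (U * mat_adjoint U) * mat_adjoint A) * U"
    unfolding adj unfolding B_def using Uc A Ac
    by (simp add: assoc_mult_mat[of _ n n _ n _ n] mult_carrier_mat[of _ n n _ n])
  also have "\<dots> = mat_adjoint U * (mat_adjoint A * (U * mat_adjoint U) * A) * U"
    using UU A Ac nor by simp
  also have "\<dots> = mat_adjoint B * B"
    unfolding adj unfolding B_def using Uc A Ac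
    by (simp add: assoc_mult_mat[of _ n n _ n _ n] mult_carrier_mat[of _ n n _ n])
  finally show ?thesis .
qed

definition diag_matrix :: "nat \<Rightarrow> (nat \<Rightarrow> complex) \<Rightarrow> complex mat" where
  "diag_matrix n e = mat n n (\<lambda>(i, j). if i = j then e i else 0)"

lemma diag_matrix_carrier [simp]:
  "diag_matrix n e \<in> carrier_mat n n" "dim_row (diag_matrix n e) = n" "dim_col (diag_matrix n e) = n"
  unfolding diag_matrix_def by auto

lemma diag_matrix_index [simp]:
  "i < n \<Longrightarrow> j < n \<Longrightarrow> diag_matrix n e $$ (i, j) = (if i = j then e i else 0)"
  unfolding diag_matrix_def by auto

lemma diag_matrix_unitary:
  assumes "\<And>i. i < n \<Longrightarrow> cmod (e i) = 1"
  shows "unitary_mat n (diag_matrix n e)"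
proof -
  have "e i * cnj (e i) = 1" if "i < n" for i
    using complex_norm_square[of "e i"] assms[OF that] by simp
  then have "diag_matrix n e * mat_adjoint (diag_matrix n e) = 1\<^sub>m n"
    "mat_adjoint (diag_matrix n e) * diag_matrix n e = 1\<^sub>m n"
    by (auto intro!: eq_matI simp del: index_mult_mat(1)
        simp: mult_mat_index_sum if_distrib sum.delta mult.commute cong: if_cong)
  then show ?thesis unfolding unitary_mat_def by simp
qed

text \<open>The characteristic polynomial in the statement is a product over \<open>{..<n}\<close>, the library
  uses products over lists.\<close>

lemma prod_lessThan_as_list:
  "(\<Prod>i<n. [:- e i, 1 :: 'a :: comm_ring_1:]) = (\<Prod>x\<leftarrow>map e [0..<n]. [:- x, 1:])"
  by (simp add: prod.list_conv_set_nth lessThan_atLeast0)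

theorem normal_spectral:
  fixes A :: "complex mat"
  assumes A: "A \<in> carrier_mat n n" and nor: "A * mat_adjoint A = mat_adjoint A * A"
    and cp: "char_poly A = (\<Prod>i<n. [:- e i, 1:])"
  shows "\<exists>U. unitary_mat n U \<and> A = U * diag_matrix n e * mat_adjoint U"
proof -
  obtain U B where U: "unitary_mat n U" and B: "B \<in> carrier_mat n n" "upper_triangular B"
    and diag: "diag_mat B = map e [0..<n]" and AB: "A = U * B * mat_adjoint U"
    using unitary_schur[OF A] cp unfolding prod_lessThan_as_list by metis
  have Uc: "U \<in> carrier_mat n n" "mat_adjoint U \<in> carrier_mat n n"
    using U unitary_carrier by auto
  have "mat_adjoint U * A * U = (mat_adjoint U * U) * B * (mat_adjoint U * U)"
    unfolding AB using Uc B
    by (simp add: assoc_mult_mat[of _ n n _ n _ n] mult_carrier_mat[of _ n n _ n])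
  also have "\<dots> = B" using U B unfolding unitary_mat_def by simp
  finally have "B * mat_adjoint B = mat_adjoint B * B"
    using normal_unitary_conj[OF U A nor] by simp
  then have "B = diag_matrix n e"
    using normal_upper_triangular_diagonal[OF B] diag B(1)
    by (intro eq_matI) (auto simp: diag_mat_def)
  then show ?thesis using U AB by blast
qed

section \<open>Expectations of local unitaries and reduced states\<close>

lemma sum_lessThan_mult_split:
  fixes m n :: nat
  shows "(\<Sum>i<m * n. f i) = (\<Sum>a<m. \<Sum>b<n. f (a * n + b))"
proof -
  have "(\<Sum>i<m * n. f i) = (\<Sum>a<m. sum f {a * n..<a * n + n})"
    using sum.nat_group[of f n m] by simp
  also have "\<dots> = (\<Sum>a<m. \<Sum>b<n. f (a * n + b))"
  proof (rule sum.cong[OF refl])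
    fix a
    show "sum f {a * n..<a * n + n} = (\<Sum>b<n. f (a * n + b))"
      using sum.shift_bounds_nat_ivl[of f 0 "a * n" n] by (simp add: lessThan_atLeast0 add.commute)
  qed
  finally show ?thesis .
qed

lemma tensor_id_index:
  assumes "a < dA" "a' < dA" "b < dB" "b' < dB"
  shows "tensor_id dA dB W $$ (a * dB + b, a' * dB + b') = (if b = b' then W $$ (a, a') else 0)"
proof -
  have "x * dB + y < dA * dB" if "x < dA" "y < dB" for x y
  proof -
    have "x * dB + y < (x + 1) * dB" using that by simp
    also have "\<dots> \<le> dA * dB" using that by (intro mult_le_mono1) simp
    finally show ?thesis .
  qed
  then show ?thesis unfolding tensor_id_def using assms by auto
qed

lemma expect_tensor_id:
  assumes psi: "psi \<in> carrier_vec (dA * dB)"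
  shows "expect psi (tensor_id dA dB W) =
    (\<Sum>a<dA. \<Sum>a'<dA. W $$ (a, a') * reduced_state dA dB psi $$ (a', a))"
proof -
  let ?X = "tensor_id dA dB W"
  have mv: "(?X *\<^sub>v psi) $ i = (\<Sum>j<dA * dB. ?X $$ (i, j) * psi $ j)" if "i < dA * dB" for i
    using that psi unfolding tensor_id_def
    by (auto simp: scalar_prod_def lessThan_atLeast0 intro!: sum.cong)
  have row: "(\<Sum>a'<dA. \<Sum>b'<dB. ?X $$ (a * dB + b, a' * dB + b') * psi $ (a' * dB + b')) =
      (\<Sum>a'<dA. W $$ (a, a') * psi $ (a' * dB + b))" if "a < dA" "b < dB" for a b
  proof (rule sum.cong[OF refl])
    fix a' assume "a' \<in> {..<dA}"
    then have "(\<Sum>b'<dB. ?X $$ (a * dB + b, a' * dB + b') * psi $ (a' * dB + b')) =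
        (\<Sum>b'<dB. if b = b' then W $$ (a, a') * psi $ (a' * dB + b') else 0)"
      using that by (intro sum.cong refl) (auto simp: tensor_id_index)
    also have "\<dots> = W $$ (a, a') * psi $ (a' * dB + b)" using that by (simp add: sum.delta)
    finally show "(\<Sum>b'<dB. ?X $$ (a * dB + b, a' * dB + b') * psi $ (a' * dB + b')) =
        W $$ (a, a') * psi $ (a' * dB + b)" .
  qed
  have "expect psi ?X = (\<Sum>i<dA * dB. cnj (psi $ i) * (\<Sum>j<dA * dB. ?X $$ (i, j) * psi $ j))"
    unfolding expect_def using psi mv by (intro sum.cong) auto
  also have "\<dots> = (\<Sum>a<dA. \<Sum>b<dB. cnj (psi $ (a * dB + b)) *
      (\<Sum>a'<dA. W $$ (a, a') * psi $ (a' * dB + b)))"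
    unfolding sum_lessThan_mult_split using row by (intro sum.cong refl) auto
  also have "\<dots> = (\<Sum>a<dA. \<Sum>a'<dA. \<Sum>b<dB.
      W $$ (a, a') * (psi $ (a' * dB + b) * cnj (psi $ (a * dB + b))))"
    by (simp add: sum_distrib_left mult_ac sum.swap[of _ "{..<dB}"])
  also have "\<dots> = (\<Sum>a<dA. \<Sum>a'<dA. W $$ (a, a') * reduced_state dA dB psi $$ (a', a))"
    unfolding reduced_state_def by (intro sum.cong refl) (auto simp: sum_distrib_left)
  finally show ?thesis .
qed

lemma diag_conj_index:
  assumes A: "A \<in> carrier_mat n n" and "a < n" "a' < n"
  shows "(A * diag_matrix n e * mat_adjoint A) $$ (a, a') =
    (\<Sum>j<n. A $$ (a, j) * e j * cnj (A $$ (a', j)))"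
proof -
  have AD: "(A * diag_matrix n e) $$ (a, k) = A $$ (a, k) * e k" if "k < n" for k
    using A assms that by (subst mult_mat_index_sum) (auto simp: if_distrib sum.delta' cong: if_cong)
  show ?thesis
    using A assms AD by (subst mult_mat_index_sum) (auto intro!: sum.cong)
qed

lemma trace_product_diag_conj:
  assumes U: "U \<in> carrier_mat n n" and V: "V \<in> carrier_mat n n"
  shows "(\<Sum>a<n. \<Sum>a'<n. (U * diag_matrix n e * mat_adjoint U) $$ (a, a') *
      (V * diag_matrix n f * mat_adjoint V) $$ (a', a))
    = (\<Sum>j<n. \<Sum>i<n. e j * f i * complex_of_real ((cmod ((mat_adjoint U * V) $$ (j, i)))\<^sup>2))"
proof -
  let ?X = "mat_adjoint U * V"
  define F where "F a a' j i = U $$ (a, j) * e j * cnj (U $$ (a', j)) *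
      (V $$ (a', i) * f i * cnj (V $$ (a, i)))" for a a' j i
  have X: "?X $$ (j, i) * cnj (?X $$ (j, i)) = (\<Sum>a<n. \<Sum>a'<n.
      U $$ (a, j) * cnj (V $$ (a, i)) * (cnj (U $$ (a', j)) * V $$ (a', i)))"
    if "j < n" "i < n" for j i
  proof -
    have "?X $$ (j, i) = (\<Sum>a<n. cnj (U $$ (a, j)) * V $$ (a, i))"
      using U V that by (subst mult_mat_index_sum) auto
    then show ?thesis by (subst mult.commute) (simp add: cnj_sum sum_product mult_ac)
  qed
  have "(\<Sum>a<n. \<Sum>a'<n. (U * diag_matrix n e * mat_adjoint U) $$ (a, a') *
      (V * diag_matrix n f * mat_adjoint V) $$ (a', a)) = (\<Sum>a<n. \<Sum>a'<n. \<Sum>j<n. \<Sum>i<n. F a a' j i)"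
    unfolding F_def by (intro sum.cong refl) (simp add: diag_conj_index U V sum_product)
  also have "\<dots> = (\<Sum>a<n. \<Sum>j<n. \<Sum>a'<n. \<Sum>i<n. F a a' j i)"
    by (intro sum.cong refl sum.swap)
  also have "\<dots> = (\<Sum>j<n. \<Sum>a<n. \<Sum>i<n. \<Sum>a'<n. F a a' j i)"
    by (subst sum.swap) (intro sum.cong refl sum.swap)
  also have "\<dots> = (\<Sum>j<n. \<Sum>i<n. \<Sum>a<n. \<Sum>a'<n. F a a' j i)"
    by (intro sum.cong refl sum.swap)
  also have "\<dots> = (\<Sum>j<n. \<Sum>i<n. e j * f i * (?X $$ (j, i) * cnj (?X $$ (j, i))))"
  proof (intro sum.cong refl)
    fix j i assume "j \<in> {..<n}" "i \<in> {..<n}"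
    then show "(\<Sum>a<n. \<Sum>a'<n. F a a' j i) = e j * f i * (?X $$ (j, i) * cnj (?X $$ (j, i)))"
      unfolding F_def using X[of j i] by (simp add: sum_distrib_left mult_ac)
  qed
  also have "\<dots> = (\<Sum>j<n. \<Sum>i<n. e j * f i * complex_of_real ((cmod (?X $$ (j, i)))\<^sup>2))"
    by (simp only: complex_norm_square)
  finally show ?thesis .
qed

lemma trace_diag_conj:
  assumes V: "unitary_mat n V"
  shows "(\<Sum>a<n. (V * diag_matrix n e * mat_adjoint V) $$ (a, a)) = (\<Sum>j<n. e j)"
proof -
  have Vc: "V \<in> carrier_mat n n" using V unitary_carrier by auto
  have "(\<Sum>a<n. (V * diag_matrix n e * mat_adjoint V) $$ (a, a)) =
      (\<Sum>a<n. \<Sum>j<n. V $$ (a, j) * e j * cnj (V $$ (a, j)))"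
    using diag_conj_index[OF Vc] by (intro sum.cong) auto
  also have "\<dots> = (\<Sum>j<n. e j * complex_of_real (\<Sum>a<n. (cmod (V $$ (a, j)))\<^sup>2))"
    by (subst sum.swap)
      (simp add: sum_distrib_left complex_norm_square mult_ac del: of_real_power)
  also have "\<dots> = (\<Sum>j<n. e j)" using unitary_sq_norm_sums(2)[OF V] by simp
  finally show ?thesis .
qed

lemma reduced_state_props:
  assumes psi: "unit_state dA dB psi"
  shows "reduced_state dA dB psi \<in> carrier_mat dA dA"
    "mat_adjoint (reduced_state dA dB psi) = reduced_state dA dB psi"
    "(\<Sum>a<dA. reduced_state dA dB psi $$ (a, a)) = 1"
proof -
  let ?r = "reduced_state dA dB psi"
  show rc: "?r \<in> carrier_mat dA dA" unfolding reduced_state_def by simp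
  show "mat_adjoint ?r = ?r"
    using rc by (intro eq_matI) (auto simp: reduced_state_def cnj_sum mult.commute)
  have "(\<Sum>a<dA. ?r $$ (a, a)) = (\<Sum>a<dA. \<Sum>b<dB. psi $ (a * dB + b) * cnj (psi $ (a * dB + b)))"
    unfolding reduced_state_def by simp
  also have "\<dots> = complex_of_real (\<Sum>i<dA * dB. (cmod (psi $ i))\<^sup>2)"
    by (simp only: complex_norm_square of_real_sum sum_lessThan_mult_split)
  also have "\<dots> = 1" using psi unfolding unit_state_def by simp
  finally show "(\<Sum>a<dA. ?r $$ (a, a)) = 1" .
qed

section \<open>Bilinear forms of doubly stochastic matrices\<close>

definition doubly_stochastic :: "nat \<Rightarrow> (nat \<Rightarrow> nat \<Rightarrow> real) \<Rightarrow> bool" where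
  "doubly_stochastic n B \<longleftrightarrow> (\<forall>j<n. \<forall>i<n. B j i \<ge> 0) \<and>
     (\<forall>j<n. (\<Sum>i<n. B j i) = 1) \<and> (\<forall>i<n. (\<Sum>j<n. B j i) = 1)"

lemma doubly_stochastic_permute:
  assumes B: "doubly_stochastic n B" and \<tau>: "\<tau> permutes {..<n}" and \<pi>: "\<pi> permutes {..<n}"
  shows "doubly_stochastic n (\<lambda>j i. B (\<tau> j) (\<pi> i))"
proof -
  have "(\<Sum>i<n. B (\<tau> j) (\<pi> i)) = (\<Sum>i<n. B (\<tau> j) i)" for j
    using sum.permute[OF \<pi>, of "B (\<tau> j)"] by (simp add: comp_def)
  moreover have "(\<Sum>j<n. B (\<tau> j) (\<pi> i)) = (\<Sum>j<n. B j (\<pi> i))" for i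
    using sum.permute[OF \<tau>, of "\<lambda>j. B j (\<pi> i)"] by (simp add: comp_def)
  ultimately show ?thesis
    using B permutes_in_image[OF \<tau>] permutes_in_image[OF \<pi>]
    unfolding doubly_stochastic_def by auto
qed

lemma sorting_permutation:
  fixes f :: "nat \<Rightarrow> real"
  obtains \<pi> where "\<pi> permutes {..<n}" "\<And>i i'. i \<le> i' \<Longrightarrow> i' < n \<Longrightarrow> f (\<pi> i') \<le> f (\<pi> i)"
proof -
  let ?ys = "map (\<lambda>i. - f i) [0..<n]"
  have "mset (sort ?ys) = mset ?ys" by simp
  then obtain \<pi> where \<pi>: "\<pi> permutes {..<length ?ys}" "permute_list \<pi> ?ys = sort ?ys"
    by (rule mset_eq_permutation)
  then have \<pi>': "\<pi> permutes {..<n}" by simp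
  have "sort ?ys ! i = - f (\<pi> i)" if "i < n" for i
  proof -
    have "sort ?ys ! i = permute_list \<pi> ?ys ! i" using \<pi> by simp
    also have "\<dots> = ?ys ! (\<pi> i)" using permute_list_nth[OF \<pi>(1)] that by simp
    also have "\<dots> = - f (\<pi> i)" using permutes_in_image[OF \<pi>'] that by simp
    finally show ?thesis .
  qed
  then have "f (\<pi> i') \<le> f (\<pi> i)" if "i \<le> i'" "i' < n" for i i'
    using sorted_nth_mono[OF sorted_sort[of ?ys] that(1)] that by simp
  then show ?thesis using that \<pi>' by blast
qed

text \<open>Abel summation: against a decreasing nonnegative weight, a sequence with nonnegative partial
  sums has a sum of products bounded below by the last weight times the total.\<close>

lemma abel_summation_ge:
  fixes p d :: "nat \<Rightarrow> real"
  assumes dec: "\<And>i i'. i \<le> i' \<Longrightarrow> i' < n \<Longrightarrow> p i' \<le> p i"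
    and partial: "\<And>m. m \<le> n \<Longrightarrow> (\<Sum>i<m. d i) \<ge> 0"
    and n: "n \<ge> 1"
  shows "(\<Sum>i<n. p i * d i) \<ge> p (n - 1) * (\<Sum>i<n. d i)"
  using assms
proof (induction n)
  case 0 then show ?case by simp
next
  case (Suc n)
  show ?case
  proof (cases "n = 0")
    case False
    have IH: "(\<Sum>i<n. p i * d i) \<ge> p (n - 1) * (\<Sum>i<n. d i)"
      using Suc False by auto
    have "p n * (\<Sum>i<n. d i) \<le> p (n - 1) * (\<Sum>i<n. d i)"
      using Suc.prems(1)[of "n - 1" n] Suc.prems(2)[of n] False by (simp add: mult_right_mono)
    then show ?thesis using IH by (simp add: algebra_simps)
  qed simp
qed

lemma fractional_selection_le:
  fixes c q :: "nat \<Rightarrow> real" and t :: real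
  assumes c: "\<And>j. j < n \<Longrightarrow> 0 \<le> c j \<and> c j \<le> 1"
    and csum: "(\<Sum>j<n. c j) = real m" and mn: "m \<le> n"
    and lo: "\<And>j. j < m \<Longrightarrow> t \<le> q j" and hi: "\<And>j. m \<le> j \<Longrightarrow> j < n \<Longrightarrow> q j \<le> t"
  shows "(\<Sum>j<n. c j * q j) \<le> (\<Sum>j<m. q j)"
proof -
  have split: "(\<Sum>j<n. g j) = (\<Sum>j<m. g j) + (\<Sum>j\<in>{m..<n}. g j)" for g :: "nat \<Rightarrow> real"
    using mn by (metis atLeast0LessThan sum.atLeastLessThan_concat zero_le)
  have "(\<Sum>j<m. c j * q j - q j) \<le> (\<Sum>j<m. (c j - 1) * t)"
  proof (intro sum_mono)
    fix j assume "j \<in> {..<m}"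
    then have "(c j - 1) * (q j - t) \<le> 0" using c lo mn by (intro mult_nonpos_nonneg) auto
    then show "c j * q j - q j \<le> (c j - 1) * t" by (simp add: algebra_simps)
  qed
  moreover have "(\<Sum>j\<in>{m..<n}. c j * q j) \<le> (\<Sum>j\<in>{m..<n}. c j * t)"
    using c hi by (intro sum_mono) (auto intro!: mult_left_mono)
  moreover have "(\<Sum>j<m. (c j - 1) * t) + (\<Sum>j\<in>{m..<n}. c j * t) = ((\<Sum>j<n. c j) - real m) * t"
    unfolding split[of c] by (simp add: algebra_simps sum_distrib_left sum_subtractf)
  ultimately show ?thesis
    using csum split[of "\<lambda>j. c j * q j"] by (simp add: sum_subtractf)
qed

lemma doubly_stochastic_partial_sums_le:
  fixes q :: "nat \<Rightarrow> real"
  assumes B: "doubly_stochastic n B"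
    and qd: "\<And>i i'. i \<le> i' \<Longrightarrow> i' < n \<Longrightarrow> q i' \<le> q i"
    and m: "m \<le> n"
  shows "(\<Sum>i<m. \<Sum>j<n. B j i * q j) \<le> (\<Sum>i<m. q i)"
proof -
  define c where "c j = (\<Sum>i<m. B j i)" for j
  have sum_eq: "(\<Sum>i<m. \<Sum>j<n. B j i * q j) = (\<Sum>j<n. c j * q j)"
    unfolding c_def by (subst sum.swap) (simp add: sum_distrib_right)
  have c: "0 \<le> c j \<and> c j \<le> 1" if j: "j < n" for j
  proof
    show "0 \<le> c j" unfolding c_def using B j m by (intro sum_nonneg) (auto simp: doubly_stochastic_def)
    have "c j \<le> (\<Sum>i<n. B j i)" unfolding c_def
      using B j m by (intro sum_mono2) (auto simp: doubly_stochastic_def)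
    then show "c j \<le> 1" using B j unfolding doubly_stochastic_def by simp
  qed
  have "(\<Sum>j<n. c j) = (\<Sum>i<m. \<Sum>j<n. B j i)" unfolding c_def by (rule sum.swap)
  also have "\<dots> = real m" using B m unfolding doubly_stochastic_def by simp
  finally have csum: "(\<Sum>j<n. c j) = real m" .
  define t where "t = (if m < n then q m else q (n - 1))"
  have lo: "t \<le> q j" if "j < m" for j
    using that m qd[of j m] qd[of j "n - 1"] unfolding t_def by auto
  have hi: "q j \<le> t" if "m \<le> j" "j < n" for j
    using that m qd[of m j] unfolding t_def by auto
  show ?thesis unfolding sum_eq using fractional_selection_le[OF c csum m lo hi] by simp
qed

lemma doubly_stochastic_sorted_bilinear_le:
  fixes p q :: "nat \<Rightarrow> real"
  assumes B: "doubly_stochastic n B"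
    and pd: "\<And>i i'. i \<le> i' \<Longrightarrow> i' < n \<Longrightarrow> p i' \<le> p i"
    and qd: "\<And>i i'. i \<le> i' \<Longrightarrow> i' < n \<Longrightarrow> q i' \<le> q i"
  shows "(\<Sum>j<n. \<Sum>i<n. B j i * q j * p i) \<le> (\<Sum>k<n. q k * p k)"
proof (cases "n = 0")
  case False
  define d where "d i = q i - (\<Sum>j<n. B j i * q j)" for i
  have "(\<Sum>i<m. d i) \<ge> 0" if "m \<le> n" for m
    using doubly_stochastic_partial_sums_le[OF B qd that] unfolding d_def by (simp add: sum_subtractf)
  moreover have "(\<Sum>i<n. d i) = 0"
  proof -
    have "(\<Sum>i<n. \<Sum>j<n. B j i * q j) = (\<Sum>j<n. q j * (\<Sum>i<n. B j i))"
      by (subst sum.swap) (simp add: sum_distrib_left mult_ac)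
    also have "\<dots> = (\<Sum>j<n. q j)" using B unfolding doubly_stochastic_def by simp
    finally show ?thesis unfolding d_def by (simp add: sum_subtractf)
  qed
  ultimately have "(\<Sum>i<n. p i * d i) \<ge> 0"
    using abel_summation_ge[of n p d] pd False by fastforce
  moreover have "(\<Sum>j<n. \<Sum>i<n. B j i * q j * p i) = (\<Sum>i<n. p i * (\<Sum>j<n. B j i * q j))"
    by (subst sum.swap) (simp add: sum_distrib_left mult_ac)
  ultimately show ?thesis
    unfolding d_def by (simp add: right_diff_distrib sum_subtractf mult.commute)
qed simp

lemma doubly_stochastic_bilinear_le_perm:
  fixes p q :: "nat \<Rightarrow> real"
  assumes B: "doubly_stochastic n B"
  obtains \<sigma> where "\<sigma> permutes {..<n}"
    "(\<Sum>j<n. \<Sum>i<n. B j i * q j * p i) \<le> (\<Sum>j<n. q j * p (\<sigma> j))"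
proof -
  obtain \<pi> where \<pi>: "\<pi> permutes {..<n}" and pd: "\<And>i i'. i \<le> i' \<Longrightarrow> i' < n \<Longrightarrow> p (\<pi> i') \<le> p (\<pi> i)"
    using sorting_permutation by blast
  obtain \<tau> where \<tau>: "\<tau> permutes {..<n}" and qd: "\<And>i i'. i \<le> i' \<Longrightarrow> i' < n \<Longrightarrow> q (\<tau> i') \<le> q (\<tau> i)"
    using sorting_permutation by blast
  have "(\<Sum>j<n. \<Sum>i<n. B j i * q j * p i) = (\<Sum>j<n. \<Sum>i<n. B (\<tau> j) i * q (\<tau> j) * p i)"
    using sum.permute[OF \<tau>, of "\<lambda>j. \<Sum>i<n. B j i * q j * p i"] by (simp add: comp_def)
  also have "\<dots> = (\<Sum>j<n. \<Sum>i<n. B (\<tau> j) (\<pi> i) * q (\<tau> j) * p (\<pi> i))"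
  proof (rule sum.cong[OF refl])
    fix j
    show "(\<Sum>i<n. B (\<tau> j) i * q (\<tau> j) * p i) = (\<Sum>i<n. B (\<tau> j) (\<pi> i) * q (\<tau> j) * p (\<pi> i))"
      using sum.permute[OF \<pi>, of "\<lambda>i. B (\<tau> j) i * q (\<tau> j) * p i"] by (simp add: comp_def)
  qed
  also have "\<dots> \<le> (\<Sum>k<n. q (\<tau> k) * p (\<pi> k))"
    using doubly_stochastic_sorted_bilinear_le[OF doubly_stochastic_permute[OF B \<tau> \<pi>] pd qd] .
  also have "\<dots> = (\<Sum>j<n. q j * p ((\<pi> \<circ> inv_into UNIV \<tau>) j))"
    using sum.permute[OF \<tau>, of "\<lambda>j. q j * p ((\<pi> \<circ> inv_into UNIV \<tau>) j)"]
    by (simp add: comp_def permutes_inverses(2)[OF \<tau>])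
  finally show ?thesis using that permutes_compose[OF permutes_inv[OF \<tau>] \<pi>] by blast
qed

lemma unitary_doubly_stochastic:
  "unitary_mat n X \<Longrightarrow> doubly_stochastic n (\<lambda>j i. (cmod (X $$ (j, i)))\<^sup>2)"
  using unitary_sq_norm_sums unfolding doubly_stochastic_def by auto

text \<open>Complex version of the permutation bound: rotate the value of the bilinear form onto the
  positive real axis and apply the real bound to the real parts of the rotated weights.\<close>

lemma doubly_stochastic_cmod_le_perm:
  fixes p :: "nat \<Rightarrow> real" and mu :: "nat \<Rightarrow> complex"
  assumes B: "doubly_stochastic n B"
  obtains \<sigma> where "\<sigma> permutes {..<n}"
    "cmod (\<Sum>j<n. \<Sum>i<n. mu j * of_real (p i) * of_real (B j i)) \<le>
     cmod (\<Sum>j<n. mu j * of_real (p (\<sigma> j)))"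
proof -
  define z where "z = (\<Sum>j<n. \<Sum>i<n. mu j * of_real (p i) * of_real (B j i))"
  define c where "c = (if z = 0 then 0 else cnj z / of_real (cmod z))"
  have cz: "c * z = of_real (cmod z)"
    using complex_norm_square[of z] unfolding c_def
    by (auto simp: power2_eq_square field_simps mult.commute)
  have c: "cmod c \<le> 1" unfolding c_def by (auto simp: norm_divide)
  define q where "q j = Re (c * mu j)" for j
  have "cmod z = Re (c * z)" using cz by simp
  also have "\<dots> = (\<Sum>j<n. \<Sum>i<n. B j i * q j * p i)"
    unfolding z_def q_def by (simp add: sum_distrib_left algebra_simps)
  finally have z_le: "cmod z = (\<Sum>j<n. \<Sum>i<n. B j i * q j * p i)" .
  obtain \<sigma> where \<sigma>: "\<sigma> permutes {..<n}"
    and le: "(\<Sum>j<n. \<Sum>i<n. B j i * q j * p i) \<le> (\<Sum>j<n. q j * p (\<sigma> j))"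
    using doubly_stochastic_bilinear_le_perm[OF B] by blast
  define S where "S = (\<Sum>j<n. mu j * of_real (p (\<sigma> j)))"
  have "(\<Sum>j<n. q j * p (\<sigma> j)) = Re (c * S)"
    unfolding q_def S_def by (simp add: sum_distrib_left algebra_simps)
  also have "\<dots> \<le> cmod (c * S)" by (rule complex_Re_le_cmod)
  also have "\<dots> \<le> cmod S" using c by (simp add: norm_mult mult_left_le_one_le)
  finally show ?thesis using that[OF \<sigma>] z_le le unfolding z_def S_def by linarith
qed

section \<open>Averages over all permutations\<close>

lemma sum_permutations_pair:
  fixes g :: "nat \<Rightarrow> nat \<Rightarrow> 'a :: comm_monoid_add"
  assumes n: "n \<ge> 2" and ik: "i < n" "k < n"
  shows "(\<Sum>\<sigma>\<in>{\<sigma>. \<sigma> permutes {..<n}}. g (\<sigma> i) (\<sigma> k)) =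
    (if i = k then (\<Sum>\<sigma>\<in>{\<sigma>. \<sigma> permutes {..<n}}. g (\<sigma> 0) (\<sigma> 0))
     else (\<Sum>\<sigma>\<in>{\<sigma>. \<sigma> permutes {..<n}}. g (\<sigma> 0) (\<sigma> 1)))"
proof -
  define T where "T i k = (\<Sum>\<sigma>\<in>{\<sigma>. \<sigma> permutes {..<n}}. g (\<sigma> i) (\<sigma> k))" for i k
  have inv: "T (\<tau> i) (\<tau> k) = T i k" if "\<tau> permutes {..<n}" for \<tau> i k
    using sum_permutations_compose_right[OF that, of "\<lambda>\<sigma>. g (\<sigma> i) (\<sigma> k)"]
    unfolding T_def by (simp add: comp_def)
  define t1 where "t1 = transpose 0 i"
  have t1: "t1 permutes {..<n}" "t1 0 = i" "t1 1 \<noteq> i" "t1 1 < n"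
    unfolding t1_def using ik n by (auto intro!: permutes_swap_id simp: transpose_def)
  define t2 where "t2 = transpose (t1 1) k"
  have t2: "t2 permutes {..<n}" unfolding t2_def using t1 ik by (intro permutes_swap_id) auto
  have "T i i = T 0 0" using inv[OF t1(1), of 0 0] t1 by simp
  moreover have "T i k = T 0 1" if "i \<noteq> k"
    using inv[OF permutes_compose[OF t1(1) t2], of 0 1] t1 that unfolding t2_def
    by (simp add: transpose_def)
  ultimately show ?thesis unfolding T_def by auto
qed

lemma permutation_second_moments:
  fixes p :: "nat \<Rightarrow> real"
  assumes n: "n \<ge> 2"
  defines "a \<equiv> (\<Sum>\<sigma>\<in>{\<sigma>. \<sigma> permutes {..<n}}. p (\<sigma> 0) * p (\<sigma> 0))"
    and "b \<equiv> (\<Sum>\<sigma>\<in>{\<sigma>. \<sigma> permutes {..<n}}. p (\<sigma> 0) * p (\<sigma> 1))"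
  shows "real n * a = fact n * (\<Sum>i<n. (p i)\<^sup>2)"
    "real n * a + real n * (real n - 1) * b = fact n * (\<Sum>i<n. p i)\<^sup>2"
proof -
  let ?P = "{\<sigma>. \<sigma> permutes {..<n}}"
  define T where "T i k = (\<Sum>\<sigma>\<in>?P. p (\<sigma> i) * p (\<sigma> k))" for i k
  have Tab: "T i k = (if i = k then a else b)" if "i < n" "k < n" for i k
    unfolding T_def a_def b_def using sum_permutations_pair[OF n that] .
  have card: "card ?P = fact n" by (rule card_permutations) auto
  have perm_sum: "(\<Sum>i<n. f (\<sigma> i)) = (\<Sum>i<n. f i)" if "\<sigma> \<in> ?P" for \<sigma> and f :: "nat \<Rightarrow> real"
    using sum.permute[of \<sigma> "{..<n}" f] that by (simp add: comp_def)
  have "real n * a = (\<Sum>i<n. T i i)" using Tab by simp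
  also have "\<dots> = (\<Sum>\<sigma>\<in>?P. \<Sum>i<n. (p (\<sigma> i))\<^sup>2)"
    unfolding T_def by (subst sum.swap) (simp add: power2_eq_square)
  also have "\<dots> = (\<Sum>\<sigma>\<in>?P. \<Sum>i<n. (p i)\<^sup>2)"
    using perm_sum[where f = "\<lambda>i. (p i)\<^sup>2"] by (rule sum.cong[OF refl]) simp
  also have "\<dots> = fact n * (\<Sum>i<n. (p i)\<^sup>2)" using card by simp
  finally show "real n * a = fact n * (\<Sum>i<n. (p i)\<^sup>2)" .
  have "real n * a + real n * (real n - 1) * b = (\<Sum>i<n. \<Sum>k<n. T i k)"
  proof -
    have "(\<Sum>i<n. \<Sum>k<n. T i k) = (\<Sum>i<n. (real n - 1) * b + a)"
    proof (rule sum.cong[OF refl])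
      fix i assume i: "i \<in> {..<n}"
      have "(\<Sum>k<n. T i k) = (\<Sum>k\<in>{..<n} - {i}. b) + a"
        using sum.remove[OF finite_lessThan i, of "T i"] Tab i by (simp add: add.commute)
      then show "(\<Sum>k<n. T i k) = (real n - 1) * b + a" using i by simp
    qed
    then show ?thesis by (simp add: algebra_simps)
  qed
  also have "\<dots> = (\<Sum>\<sigma>\<in>?P. (\<Sum>i<n. p (\<sigma> i)) * (\<Sum>k<n. p (\<sigma> k)))"
    unfolding T_def by (simp add: sum.swap[of _ ?P] sum_product)
  also have "\<dots> = (\<Sum>\<sigma>\<in>?P. (\<Sum>i<n. p i)\<^sup>2)"
    by (rule sum.cong[OF refl]) (simp add: power2_eq_square perm_sum)
  also have "\<dots> = fact n * (\<Sum>i<n. p i)\<^sup>2" using card by simp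
  finally show "real n * a + real n * (real n - 1) * b = fact n * (\<Sum>i<n. p i)\<^sup>2" .
qed

text \<open>Averaging \<open>|\<Sum>\<^sub>i \<lambda>\<^sub>i p\<^bsub>\<sigma> i\<^esub>|\<^sup>2\<close> over all permutations, for unimodular weights
  \<open>\<lambda>\<close> summing to zero: the cross terms cancel and only second moments of \<open>p\<close> remain.\<close>

lemma permutation_average_sq:
  fixes p :: "nat \<Rightarrow> real" and lam :: "nat \<Rightarrow> complex"
  assumes n: "n \<ge> 2" and lam_sum: "(\<Sum>i<n. lam i) = 0"
    and lam_norm: "\<And>i. i < n \<Longrightarrow> cmod (lam i) = 1"
  shows "(\<Sum>\<sigma>\<in>{\<sigma>. \<sigma> permutes {..<n}}. (cmod (\<Sum>i<n. lam i * of_real (p (\<sigma> i))))\<^sup>2) =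
    fact n * ((\<Sum>i<n. (p i)\<^sup>2) - ((\<Sum>i<n. p i)\<^sup>2 - (\<Sum>i<n. (p i)\<^sup>2)) / (real n - 1))"
proof -
  let ?P = "{\<sigma>. \<sigma> permutes {..<n}}"
  define a where "a = (\<Sum>\<sigma>\<in>?P. p (\<sigma> 0) * p (\<sigma> 0))"
  define b where "b = (\<Sum>\<sigma>\<in>?P. p (\<sigma> 0) * p (\<sigma> 1))"
  define c where "c i k = lam i * cnj (lam k)" for i k
  have c_diag: "c i i = 1" if "i < n" for i
    unfolding c_def using complex_norm_square[of "lam i"] lam_norm[OF that] by simp
  have c_sum: "(\<Sum>i<n. \<Sum>k<n. c i k) = 0"
    unfolding c_def using lam_sum by (simp add: sum_product[symmetric] cnj_sum[symmetric])
  have "complex_of_real (\<Sum>\<sigma>\<in>?P. (cmod (\<Sum>i<n. lam i * of_real (p (\<sigma> i))))\<^sup>2) =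
      (\<Sum>\<sigma>\<in>?P. \<Sum>i<n. \<Sum>k<n. c i k * of_real (p (\<sigma> i) * p (\<sigma> k)))"
    unfolding of_real_sum complex_norm_square c_def
    by (simp add: sum_product cnj_sum mult_ac)
  also have "\<dots> = (\<Sum>i<n. \<Sum>k<n. c i k * of_real (\<Sum>\<sigma>\<in>?P. p (\<sigma> i) * p (\<sigma> k)))"
    unfolding of_real_sum by (simp add: sum.swap[of _ ?P] sum_distrib_left)
  also have "\<dots> = (\<Sum>i<n. \<Sum>k<n. c i k * of_real (if i = k then a else b))"
  proof (intro sum.cong refl)
    fix i k assume "i \<in> {..<n}" "k \<in> {..<n}"
    then have "i < n" "k < n" by auto
    then show "c i k * of_real (\<Sum>\<sigma>\<in>?P. p (\<sigma> i) * p (\<sigma> k)) = c i k * of_real (if i = k then a else b)"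
      unfolding a_def b_def by (subst sum_permutations_pair[OF n]) simp_all
  qed
  also have "\<dots> = (\<Sum>i<n. \<Sum>k<n. c i k * of_real b + (if i = k then c i k * of_real (a - b) else 0))"
    by (intro sum.cong refl) (simp add: algebra_simps)
  also have "\<dots> = (\<Sum>i<n. \<Sum>k<n. c i k) * of_real b + (\<Sum>i<n. c i i * of_real (a - b))"
    by (simp add: sum.distrib sum_distrib_right)
  also have "\<dots> = of_real (real n * (a - b))"
    using c_diag c_sum by simp
  finally have avg: "(\<Sum>\<sigma>\<in>?P. (cmod (\<Sum>i<n. lam i * of_real (p (\<sigma> i))))\<^sup>2) = real n * (a - b)"
    using of_real_eq_iff by blast
  have n1: "real n - 1 > 0" using n by simp
  from permutation_second_moments[OF n, of p, folded a_def b_def] n1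
  have "real n * b = fact n * ((\<Sum>i<n. p i)\<^sup>2 - (\<Sum>i<n. (p i)\<^sup>2)) / (real n - 1)"
    "real n * a = fact n * (\<Sum>i<n. (p i)\<^sup>2)"
    by (simp_all add: field_simps)
  then show ?thesis unfolding avg by (simp add: algebra_simps)
qed

section \<open>The stellar spectrum\<close>

lemma stellar_lambda_norm [simp]: "cmod (stellar_lambda d i) = 1"
  unfolding stellar_lambda_def by simp

text \<open>The stellar spectrum consists of the \<open>d\<close>-th roots of \<open>-1\<close>, a rotated geometric progression
  of ratio \<open>e^{-2\<pi>i/d} \<noteq> 1\<close>; hence it sums to zero.\<close>

lemma stellar_lambda_sum:
  assumes d: "d \<ge> 2"
  shows "(\<Sum>i<d. stellar_lambda d i) = 0"
proof -
  define z where "z = cis (- 2 * pi / real d)"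
  define c where "c = cis ((real d - 1) * pi / real d)"
  have dpos: "real d > 0" using d by simp
  have "stellar_lambda d i = c * z ^ i" for i
  proof -
    have "(real d - 1) * pi / real d + real i * (- 2 * pi / real d) =
        (real d - 2 * real (Suc i) + 1) * pi / real d"
      using dpos by (simp add: field_simps)
    then show ?thesis unfolding c_def z_def DeMoivre cis_mult stellar_lambda_def by simp
  qed
  then have "(\<Sum>i<d. stellar_lambda d i) = c * (\<Sum>i<d. z ^ i)" by (simp add: sum_distrib_left)
  moreover have "z ^ d = 1"
    unfolding z_def DeMoivre using dpos by (simp add: cis_def complex_eq_iff)
  moreover have "z \<noteq> 1"
  proof
    assume "z = 1"
    then have "cos (2 * pi / real d) = 1" unfolding z_def by (simp add: complex_eq_iff)
    moreover have "cos (2 * pi / real d) < cos 0"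
      using d dpos by (intro cos_monotone_0_pi) (auto simp: field_simps)
    ultimately show False by simp
  qed
  ultimately show ?thesis using geometric_sum[of z d] by simp
qed

lemma stellar_sq_low_dim:
  fixes g :: "nat \<Rightarrow> real"
  assumes "d = 2 \<or> d = 3"
  shows "(cmod (\<Sum>i<d. stellar_lambda d i * of_real (g i)))\<^sup>2 =
    (real d * (\<Sum>i<d. (g i)\<^sup>2) - (\<Sum>i<d. g i)\<^sup>2) / (real d - 1)"
  using assms
proof
  assume d: "d = 2"
  have lam: "stellar_lambda 2 0 = \<i>" "stellar_lambda 2 1 = - \<i>"
    unfolding stellar_lambda_def by (simp_all add: complex_eq_iff)
  have sum2: "(\<Sum>i<2. f i) = f 0 + f 1" for f :: "nat \<Rightarrow> 'b :: comm_monoid_add"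
    by (simp add: numeral_2_eq_2)
  show ?thesis unfolding d sum2 lam cmod_power2 by (simp add: power2_eq_square algebra_simps)
next
  assume d: "d = 3"
  have "(3 - 2 * real (Suc 2) + 1) * pi / 3 = - (2 * pi / 3)" by simp
  then have lam: "stellar_lambda 3 0 = Complex (-1/2) (sqrt 3 / 2)" "stellar_lambda 3 1 = 1"
    "stellar_lambda 3 2 = Complex (-1/2) (- sqrt 3 / 2)"
    unfolding stellar_lambda_def by (simp_all add: complex_eq_iff cos_120 sin_120)
  have sum3: "(\<Sum>i<3. f i) = f 0 + f 1 + f 2" for f :: "nat \<Rightarrow> 'b :: comm_monoid_add"
    by (simp add: numeral_3_eq_3 numeral_2_eq_2)
  have sqrt3: "sqrt 3 * sqrt 3 = (3::real)" "sqrt 3 * (sqrt 3 * x) = 3 * (x::real)" for x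
    by (simp_all add: mult.assoc[symmetric])
  show ?thesis unfolding d sum3 lam cmod_power2 by (simp add: power2_eq_square algebra_simps sqrt3)
qed

section \<open>The stellar mirror entanglement and the main theorem\<close>

definition stellar_overlap :: "nat \<Rightarrow> (nat \<Rightarrow> real) \<Rightarrow> (nat \<Rightarrow> nat) \<Rightarrow> complex" where
  "stellar_overlap d p \<sigma> = (\<Sum>i<d. stellar_lambda d i * complex_of_real (p (\<sigma> i)))"

text \<open>If the reduced state has characteristic roots \<open>p\<close>, it is \<open>V diag(p) V\<^sup>*\<close> for a unitary
  \<open>V\<close> (it is Hermitian), and \<open>p\<close> sums to one (its trace).\<close>

lemma reduced_state_diagonalization:
  assumes psi: "unit_state dA dB psi"
    and cp: "char_poly (reduced_state dA dB psi) = (\<Prod>i<dA. [:- complex_of_real (p i), 1:])"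
  obtains V where "unitary_mat dA V"
    "reduced_state dA dB psi = V * diag_matrix dA (\<lambda>i. complex_of_real (p i)) * mat_adjoint V"
    "(\<Sum>i<dA. p i) = 1"
proof -
  note \<rho> = reduced_state_props[OF psi]
  obtain V where V: "unitary_mat dA V"
    and r: "reduced_state dA dB psi = V * diag_matrix dA (\<lambda>i. complex_of_real (p i)) * mat_adjoint V"
    using normal_spectral[OF \<rho>(1) _ cp] \<rho>(2) by auto
  have "complex_of_real (\<Sum>i<dA. p i) = 1"
    using trace_diag_conj[OF V, of "\<lambda>i. complex_of_real (p i)"] \<rho>(3) r by simp
  then show ?thesis using that[OF V r] of_real_eq_1_iff by blast
qed

lemma expect_diag_conj:
  assumes V: "unitary_mat dA V" and U: "unitary_mat dA U"
    and r: "reduced_state dA dB psi = V * diag_matrix dA (\<lambda>i. complex_of_real (p i)) * mat_adjoint V"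
    and psi: "psi \<in> carrier_vec (dA * dB)"
  shows "expect psi (tensor_id dA dB (U * diag_matrix dA mu * mat_adjoint U)) =
    (\<Sum>j<dA. \<Sum>i<dA. mu j * of_real (p i) * of_real ((cmod ((mat_adjoint U * V) $$ (j, i)))\<^sup>2))"
  unfolding expect_tensor_id[OF psi] r
  using trace_product_diag_conj U V unitary_carrier by blast

lemma stellar_unitary_le_overlap:
  assumes V: "unitary_mat dA V"
    and r: "reduced_state dA dB psi = V * diag_matrix dA (\<lambda>i. complex_of_real (p i)) * mat_adjoint V"
    and psi: "psi \<in> carrier_vec (dA * dB)"
    and W: "stellar_unitary dA W"
  obtains \<sigma> where "\<sigma> permutes {..<dA}"
    "cmod (expect psi (tensor_id dA dB W)) \<le> cmod (stellar_overlap dA p \<sigma>)"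
proof -
  have Wu: "unitary_mat dA W" and cp: "char_poly W = (\<Prod>i<dA. [:- stellar_lambda dA i, 1:])"
    using W unfolding stellar_unitary_def by auto
  obtain U where U: "unitary_mat dA U" and WU: "W = U * diag_matrix dA (stellar_lambda dA) * mat_adjoint U"
    using normal_spectral[OF unitary_carrier[OF Wu] _ cp] Wu unfolding unitary_mat_def by auto
  have B: "doubly_stochastic dA (\<lambda>j i. (cmod ((mat_adjoint U * V) $$ (j, i)))\<^sup>2)"
    by (rule unitary_doubly_stochastic[OF unitary_mult[OF unitary_adjoint[OF U] V]])
  show ?thesis
    using doubly_stochastic_cmod_le_perm[OF B] that
    unfolding WU expect_diag_conj[OF V U r psi] stellar_overlap_def by blast
qed

text \<open>Conversely every permuted overlap is attained, by the stellar unitary that is diagonal in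
  the eigenbasis of \<open>\<rho>\<close>.\<close>

lemma stellar_overlap_attained:
  assumes V: "unitary_mat dA V"
    and r: "reduced_state dA dB psi = V * diag_matrix dA (\<lambda>i. complex_of_real (p i)) * mat_adjoint V"
    and psi: "psi \<in> carrier_vec (dA * dB)"
    and \<sigma>: "\<sigma> permutes {..<dA}"
  obtains W where "stellar_unitary dA W" "expect psi (tensor_id dA dB W) = stellar_overlap dA p \<sigma>"
proof -
  define mu where "mu k = stellar_lambda dA (inv_into UNIV \<sigma> k)" for k
  define W where "W = V * diag_matrix dA mu * mat_adjoint V"
  have Vc: "V \<in> carrier_mat dA dA" using V unitary_carrier by blast
  have "similar_mat W (diag_matrix dA mu)"
    unfolding similar_mat_def similar_mat_wit_def Let_def W_def
    using V Vc unfolding unitary_mat_def by (intro exI[of _ V] exI[of _ "mat_adjoint V"]) auto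
  then have "char_poly W = char_poly (diag_matrix dA mu)" by (rule char_poly_similar)
  also have "\<dots> = (\<Prod>a\<leftarrow>diag_mat (diag_matrix dA mu). [:- a, 1:])"
    by (rule char_poly_upper_triangular) (auto simp: upper_triangular_def)
  also have "diag_mat (diag_matrix dA mu) = map mu [0..<dA]" unfolding diag_mat_def by auto
  also have "(\<Prod>a\<leftarrow>map mu [0..<dA]. [:- a, 1:]) = (\<Prod>k<dA. [:- mu k, 1:])"
    by (rule prod_lessThan_as_list[symmetric])
  also have "\<dots> = (\<Prod>k<dA. [:- stellar_lambda dA k, 1:])"
    unfolding mu_def using prod.permute[OF permutes_inv[OF \<sigma>], of "\<lambda>k. [:- stellar_lambda dA k, 1:]"]
    by (simp add: comp_def)
  moreover have "unitary_mat dA W"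
    unfolding W_def mu_def by (intro unitary_mult unitary_adjoint V diag_matrix_unitary) simp
  ultimately have "stellar_unitary dA W" unfolding stellar_unitary_def by simp
  moreover have "expect psi (tensor_id dA dB W) =
      (\<Sum>j<dA. \<Sum>i<dA. if i = j then mu j * of_real (p j) else 0)"
    unfolding W_def expect_diag_conj[OF V V r psi] using V unfolding unitary_mat_def
    by (intro sum.cong refl) auto
  moreover have "\<dots> = (\<Sum>j<dA. mu j * of_real (p j))" by (simp add: sum.delta)
  moreover have "(\<Sum>j<dA. mu j * of_real (p j)) = stellar_overlap dA p \<sigma>"
    unfolding mu_def stellar_overlap_def
    using sum.permute[OF \<sigma>, of "\<lambda>j. stellar_lambda dA (inv_into UNIV \<sigma> j) * of_real (p j)"]
    by (simp add: comp_def permutes_inverses(2)[OF \<sigma>])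
  ultimately show ?thesis using that by metis
qed

lemma stellar_ent_perm_max:
  assumes V: "unitary_mat dA V"
    and r: "reduced_state dA dB psi = V * diag_matrix dA (\<lambda>i. complex_of_real (p i)) * mat_adjoint V"
    and psi: "psi \<in> carrier_vec (dA * dB)"
  shows "stellar_ent dA dB psi =
    1 - Max ((\<lambda>\<sigma>. (cmod (stellar_overlap dA p \<sigma>))\<^sup>2) ` {\<sigma>. \<sigma> permutes {..<dA}})"
proof -
  let ?P = "{\<sigma>. \<sigma> permutes {..<dA}}"
  let ?f = "\<lambda>\<sigma>. (cmod (stellar_overlap dA p \<sigma>))\<^sup>2"
  let ?g = "\<lambda>W. (cmod (expect psi (tensor_id dA dB W)))\<^sup>2"
  have "id \<in> ?P" by (simp add: permutes_id)
  then have fin: "finite (?f ` ?P)" "?f ` ?P \<noteq> {}"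
    using finite_permutations[of "{..<dA}"] by blast+
  obtain \<sigma>0 where \<sigma>0: "\<sigma>0 \<in> ?P" and max: "Max (?f ` ?P) = ?f \<sigma>0"
    using Max_in[OF fin] by auto
  have "(SUP W \<in> {W. stellar_unitary dA W}. ?g W) = Max (?f ` ?P)"
  proof (rule cSup_eq_maximum)
    obtain W0 where W0: "stellar_unitary dA W0"
      and e0: "expect psi (tensor_id dA dB W0) = stellar_overlap dA p \<sigma>0"
      using stellar_overlap_attained[OF V r psi] \<sigma>0 by blast
    show "Max (?f ` ?P) \<in> ?g ` {W. stellar_unitary dA W}"
      unfolding max by (rule image_eqI[where x = W0]) (use W0 e0 in simp_all)
  next
    fix y assume "y \<in> ?g ` {W. stellar_unitary dA W}"
    then obtain W where W: "stellar_unitary dA W" and y: "y = ?g W" by auto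
    obtain \<sigma> where \<sigma>: "\<sigma> \<in> ?P"
      and le: "cmod (expect psi (tensor_id dA dB W)) \<le> cmod (stellar_overlap dA p \<sigma>)"
      using stellar_unitary_le_overlap[OF V r psi W] by blast
    have "y \<le> ?f \<sigma>" unfolding y using le by (intro power_mono) simp_all
    moreover have "?f \<sigma> \<le> Max (?f ` ?P)" using fin(1) \<sigma> by (intro Max_ge) auto
    ultimately show "y \<le> Max (?f ` ?P)" by linarith
  qed
  then show ?thesis unfolding stellar_ent_def by (rule arg_cong)
qed

lemma max_eq_mean_iff_constant:
  fixes f :: "'a \<Rightarrow> real"
  assumes X: "finite X" "X \<noteq> {}"
  shows "Max (f ` X) = sum f X / card X \<longleftrightarrow> (\<forall>x\<in>X. \<forall>y\<in>X. f x = f y)"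
proof
  assume mean: "Max (f ` X) = sum f X / card X"
  have "(\<Sum>x\<in>X. Max (f ` X) - f x) = 0"
    using mean X by (simp add: sum_subtractf)
  moreover have "\<forall>x\<in>X. Max (f ` X) - f x \<ge> 0" using X by simp
  ultimately have zero: "\<forall>x\<in>X. Max (f ` X) - f x = 0"
    using sum_nonneg_eq_0_iff[OF X(1), of "\<lambda>x. Max (f ` X) - f x"] by simp
  show "\<forall>x\<in>X. \<forall>y\<in>X. f x = f y"
  proof (intro ballI)
    fix x y assume "x \<in> X" "y \<in> X"
    with zero have "Max (f ` X) - f x = 0" "Max (f ` X) - f y = 0" by blast+
    then show "f x = f y" by linarith
  qed
next
  assume const: "\<forall>x\<in>X. \<forall>y\<in>X. f x = f y"
  obtain x0 where x0: "x0 \<in> X" using X by blast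
  have fx: "f x = f x0" if "x \<in> X" for x using const x0 that by blast
  have "Max (f ` X) = f x0"
  proof (rule Max_eqI)
    fix y assume "y \<in> f ` X"
    then obtain x where "x \<in> X" "y = f x" by blast
    then show "y \<le> f x0" using fx[of x] by simp
  qed (use X x0 in auto)
  moreover have "sum f X = (\<Sum>x\<in>X. f x0)" using fx by (intro sum.cong refl) simp
  ultimately show "Max (f ` X) = sum f X / card X" using X by simp
qed

lemma linear_entropy_perm_mean:
  assumes d: "d \<ge> 2" and p1: "(\<Sum>i<d. p i) = 1"
  shows "linear_entropy d p = 1 - (\<Sum>\<sigma>\<in>{\<sigma>. \<sigma> permutes {..<d}}. (cmod (stellar_overlap d p \<sigma>))\<^sup>2) /
    card {\<sigma>. \<sigma> permutes {..<d}}"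
proof -
  have "(\<Sum>\<sigma>\<in>{\<sigma>. \<sigma> permutes {..<d}}. (cmod (stellar_overlap d p \<sigma>))\<^sup>2) =
      fact d * ((\<Sum>i<d. (p i)\<^sup>2) - (1 - (\<Sum>i<d. (p i)\<^sup>2)) / (real d - 1))"
    using permutation_average_sq[OF d stellar_lambda_sum[OF d]] p1
    unfolding stellar_overlap_def by simp
  moreover have "card {\<sigma>. \<sigma> permutes {..<d}} = fact d" by (rule card_permutations) auto
  ultimately show ?thesis using d unfolding linear_entropy_def by (simp add: field_simps)
qed

lemma stellar_overlap_low_dim_constant:
  assumes d: "d = 2 \<or> d = 3" and \<sigma>: "\<sigma> permutes {..<d}" and \<tau>: "\<tau> permutes {..<d}"
  shows "(cmod (stellar_overlap d p \<sigma>))\<^sup>2 = (cmod (stellar_overlap d p \<tau>))\<^sup>2"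
proof -
  have "(cmod (stellar_overlap d p \<pi>))\<^sup>2 = (real d * (\<Sum>i<d. (p i)\<^sup>2) - (\<Sum>i<d. p i)\<^sup>2) / (real d - 1)"
    if \<pi>: "\<pi> permutes {..<d}" for \<pi>
  proof -
    have perm: "(\<Sum>i<d. g (\<pi> i)) = (\<Sum>i<d. g i)" for g :: "nat \<Rightarrow> real"
      using sum.permute[OF \<pi>, of g] by (simp add: comp_def)
    show ?thesis unfolding stellar_overlap_def stellar_sq_low_dim[OF d]
      by (simp only: perm[of p] perm[of "\<lambda>i. (p i)\<^sup>2"])
  qed
  then show ?thesis using \<sigma> \<tau> by simp
qed

theorem mainTheorem7:
  fixes dA dB :: nat and psi :: "complex vec" and p :: "nat \<Rightarrow> real"
  assumes "2 \<le> dA" and "dA \<le> dB"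
    and "unit_state dA dB psi"
    and "char_poly (reduced_state dA dB psi) = (\<Prod>i<dA. [:- complex_of_real (p i), 1:])"
  shows "(stellar_ent dA dB psi = linear_entropy dA p \<longleftrightarrow>
            (\<forall>\<sigma> \<tau>. \<sigma> permutes {..<dA} \<longrightarrow> \<tau> permutes {..<dA} \<longrightarrow>
               cmod (\<Sum>i<dA. stellar_lambda dA i * complex_of_real (p (\<sigma> i))) =
               cmod (\<Sum>i<dA. stellar_lambda dA i * complex_of_real (p (\<tau> i)))))
         \<and> (dA \<le> 3 \<longrightarrow> stellar_ent dA dB psi = linear_entropy dA p)"
proof -
  let ?P = "{\<sigma>. \<sigma> permutes {..<dA}}"
  define f where "f \<sigma> = (cmod (stellar_overlap dA p \<sigma>))\<^sup>2" for \<sigma>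
  obtain V where V: "unitary_mat dA V"
    and r: "reduced_state dA dB psi = V * diag_matrix dA (\<lambda>i. complex_of_real (p i)) * mat_adjoint V"
    and p1: "(\<Sum>i<dA. p i) = 1"
    using reduced_state_diagonalization[OF assms(3,4)] by blast
  have psi: "psi \<in> carrier_vec (dA * dB)" using assms(3) unfolding unit_state_def by simp
  have P: "finite ?P" "?P \<noteq> {}"
    using finite_permutations[of "{..<dA}"] permutes_id[of "{..<dA}"] by blast+
  have "stellar_ent dA dB psi = linear_entropy dA p \<longleftrightarrow> Max (f ` ?P) = sum f ?P / card ?P"
    unfolding stellar_ent_perm_max[OF V r psi] linear_entropy_perm_mean[OF assms(1) p1] f_def
    by simp
  also have "\<dots> \<longleftrightarrow> (\<forall>\<sigma>\<in>?P. \<forall>\<tau>\<in>?P. f \<sigma> = f \<tau>)" by (rule max_eq_mean_iff_constant[OF P])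
  also have "\<dots> \<longleftrightarrow> (\<forall>\<sigma> \<tau>. \<sigma> permutes {..<dA} \<longrightarrow> \<tau> permutes {..<dA} \<longrightarrow>
      cmod (\<Sum>i<dA. stellar_lambda dA i * complex_of_real (p (\<sigma> i))) =
      cmod (\<Sum>i<dA. stellar_lambda dA i * complex_of_real (p (\<tau> i))))"
    unfolding f_def stellar_overlap_def by (simp add: power2_eq_iff_nonneg)
  finally have iff: "stellar_ent dA dB psi = linear_entropy dA p \<longleftrightarrow>
      (\<forall>\<sigma> \<tau>. \<sigma> permutes {..<dA} \<longrightarrow> \<tau> permutes {..<dA} \<longrightarrow>
        cmod (\<Sum>i<dA. stellar_lambda dA i * complex_of_real (p (\<sigma> i))) =
        cmod (\<Sum>i<dA. stellar_lambda dA i * complex_of_real (p (\<tau> i))))" .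
  have "cmod (\<Sum>i<dA. stellar_lambda dA i * complex_of_real (p (\<sigma> i))) =
      cmod (\<Sum>i<dA. stellar_lambda dA i * complex_of_real (p (\<tau> i)))"
    if "dA \<le> 3" "\<sigma> permutes {..<dA}" "\<tau> permutes {..<dA}" for \<sigma> \<tau>
  proof -
    have "dA = 2 \<or> dA = 3" using that(1) assms(1) by linarith
    from stellar_overlap_low_dim_constant[OF this that(2,3), of p] show ?thesis
      unfolding stellar_overlap_def by (simp add: power2_eq_iff_nonneg)
  qed
  then show ?thesis using iff by blast
qed

end
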